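(* Fix $t\in[0,T]$ (and $\omega$). Assume $\nu(\{\psi_t>0\})>0$ and $\nu(\{\psi_t<0\})>0$, and let $c,C\in(0,\infty)$ be such that $\nu(\{\psi_t>C\})>0$ and $\nu(\{\psi_t<-c\})>0$. Then for any $u\in\mathrm L^2(\nu)\cap\mathrm L^\infty(\nu)$ and any $$\pi_t^*\in\operatorname{argmin}_{\pi\in\mathcal C}\left\{\int_{\mathbb R^*}g_\alpha(u(x)-\pi\psi_t(x))\,\nu(dx)-\pi\varphi_t\right\}$$ it holds almost surely that $$-3\frac{\|u\|_\infty}{C}-2\frac{|\varphi_t|}{\alpha\nu(\psi_t>C)C^2}-\frac{\sqrt2}{\sqrt{\alpha\nu(\psi_t>C)}\,C}\sqrt{|u|_\alpha}\ \le\ \pi_t^*\ \le\ 3\frac{\|u\|_\infty}{c}+2\frac{|\varphi_t|}{\alpha\nu(\psi_t<-c)c^2}+\frac{\sqrt2}{\sqrt{\alpha\nu(\psi_t<-c)}\,c}\sqrt{|u|_\alpha}.$$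
   Context: $\nu$ is a positive measure on $\mathbb R^*=\mathbb R\setminus\{0\}$ with $\nu(\{0\})=0$ and $\int(1\wedge|x|^2)\nu(dx)<\infty$ (Lévy measure of a Poisson point process on a filtered probability space). $\varphi$ is a uniformly bounded predictable real process and $\psi=\psi_t(x)$ a uniformly bounded predictable process with $\mathbb E\int_0^T\int\psi^2 d\nu dt<\infty$ and $\psi>-1$. $\alpha>0$, $g_\alpha(y)=\frac{e^{\alpha y}-\alpha y-1}{\alpha}$, and $|u|_\alpha:=\int_{\mathbb R^*}g_\alpha(u(x))\,\nu(dx)$; $\|u\|_\infty$ is the $\nu$-essential supremum of $|u|$. $\mathcal C\subseteq\mathbb R$ is a closed set with $0\in\mathcal C$ (the constraint set for strategies). *)

theory Defs
  imports "HOL-Probability.Probability"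
begin

definition g_alpha :: "real \<Rightarrow> real \<Rightarrow> real" where
  "g_alpha \<alpha> y = (exp (\<alpha> * y) - \<alpha> * y - 1) / \<alpha>"

definition alpha_norm :: "real measure \<Rightarrow> real \<Rightarrow> (real \<Rightarrow> real) \<Rightarrow> real" where
  "alpha_norm \<nu> \<alpha> u = (\<integral>x. g_alpha \<alpha> (u x) \<partial>\<nu>)"

definition ess_sup_norm :: "real measure \<Rightarrow> (real \<Rightarrow> real) \<Rightarrow> real" where
  "ess_sup_norm \<nu> u = real_of_ereal (esssup \<nu> (\<lambda>x. ereal \<bar>u x\<bar>))"

definition objective :: "real measure \<Rightarrow> real \<Rightarrow> (real \<Rightarrow> real) \<Rightarrow> (real \<Rightarrow> real) \<Rightarrow> real \<Rightarrow> real \<Rightarrow> real" where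
  "objective \<nu> \<alpha> u \<psi> \<phi> p = (\<integral>x. g_alpha \<alpha> (u x - p * \<psi> x) \<partial>\<nu>) - p * \<phi>"

end

theory Submission
  imports Defs
begin

text \<open>
  Comparing with the admissible strategy 0, the objective at the minimiser is at most
  \<open>|u|\<^sub>\<alpha>\<close>. On \<open>A = {\<psi> < -c}\<close> a strategy \<open>p \<ge> \<parallel>u\<parallel>\<^sub>\<infinity>/c\<close> makes
  \<open>u - p\<psi> \<ge> pc - \<parallel>u\<parallel>\<^sub>\<infinity> \<ge> 0\<close>, and \<open>g\<^sub>\<alpha> y \<ge> \<alpha>y\<^sup>2/2\<close> for \<open>y \<ge> 0\<close>, so the objective
  grows at least like \<open>\<alpha> \<nu>(A) (pc - \<parallel>u\<parallel>\<^sub>\<infinity>)\<^sup>2/2 - p\<phi>\<close>. Solving the resulting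
  quadratic inequality bounds the minimiser from above; the lower bound is the same
  argument for \<open>-\<psi>\<close> on \<open>{\<psi> > C}\<close>. By Markov's inequality for \<open>\<psi>\<^sup>2\<close> these sets have
  finite measure, so their measures are positive reals.
\<close>

lemma g_alpha_nonneg:
  assumes "\<alpha> > 0"
  shows "0 \<le> g_alpha \<alpha> y"
proof -
  have "0 \<le> exp (\<alpha> * y) - \<alpha> * y - 1"
    using exp_ge_add_one_self[of "\<alpha> * y"] by linarith
  then show ?thesis
    using assms by (simp add: g_alpha_def)
qed

lemma g_alpha_ge_quadratic:
  assumes "\<alpha> > 0" "y \<ge> 0"
  shows "\<alpha> * y\<^sup>2 / 2 \<le> g_alpha \<alpha> y"
proof -
  have "1 + \<alpha> * y + (\<alpha> * y)\<^sup>2 / 2 \<le> exp (\<alpha> * y)"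
    using assms by (intro exp_lower_Taylor_quadratic) simp
  then have "\<alpha> * (\<alpha> * y\<^sup>2 / 2) \<le> exp (\<alpha> * y) - \<alpha> * y - 1"
    by (simp add: power2_eq_square algebra_simps)
  then show ?thesis
    using assms by (simp add: g_alpha_def field_simps)
qed

lemma g_alpha_le_quadratic:
  assumes "\<alpha> > 0" "\<bar>y\<bar> \<le> R"
  shows "g_alpha \<alpha> y \<le> exp (\<alpha> * R) * \<alpha> * y\<^sup>2 / 2"
proof -
  obtain t where t: "\<bar>t\<bar> \<le> \<bar>\<alpha> * y\<bar>"
    and taylor: "exp (\<alpha> * y) = (\<Sum>m<2. (\<alpha> * y) ^ m / fact m) + exp t / fact 2 * (\<alpha> * y)\<^sup>2"
    using Maclaurin_exp_le[of "\<alpha> * y" 2] by blast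
  have remainder: "exp (\<alpha> * y) - \<alpha> * y - 1 = exp t / 2 * (\<alpha> * y)\<^sup>2"
    using taylor by (simp add: numeral_2_eq_2)
  have "\<bar>\<alpha> * y\<bar> \<le> \<alpha> * R"
    using assms by (simp add: abs_mult mult_left_mono)
  with t have "exp t \<le> exp (\<alpha> * R)"
    by simp
  then have "exp t / 2 * (\<alpha> * y)\<^sup>2 \<le> exp (\<alpha> * R) / 2 * (\<alpha> * y)\<^sup>2"
    by (intro mult_right_mono) auto
  then have "exp (\<alpha> * y) - \<alpha> * y - 1 \<le> \<alpha> * (exp (\<alpha> * R) * \<alpha> * y\<^sup>2 / 2)"
    using remainder by (simp add: power2_eq_square algebra_simps)
  then show ?thesis
    using assms by (simp add: g_alpha_def field_simps)
qed

lemma integrable_square_diff: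
  fixes f g :: "'a \<Rightarrow> real"
  assumes [measurable]: "f \<in> borel_measurable M" "g \<in> borel_measurable M"
    and "integrable M (\<lambda>x. (f x)\<^sup>2)" "integrable M (\<lambda>x. (g x)\<^sup>2)"
  shows "integrable M (\<lambda>x. (f x - g x)\<^sup>2)"
proof (rule Bochner_Integration.integrable_bound)
  show "integrable M (\<lambda>x. 2 * (f x)\<^sup>2 + 2 * (g x)\<^sup>2)"
    using assms(3,4) by auto
  have "(a - b)\<^sup>2 \<le> 2 * a\<^sup>2 + 2 * b\<^sup>2" for a b :: real
    using zero_le_power2[of "a + b"] by (simp add: power2_eq_square algebra_simps)
  then show "AE x in M. norm ((f x - g x)\<^sup>2) \<le> norm (2 * (f x)\<^sup>2 + 2 * (g x)\<^sup>2)"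
    by simp
qed measurable

lemma integrable_g_alpha:
  fixes f :: "'a \<Rightarrow> real"
  assumes "\<alpha> > 0" and [measurable]: "f \<in> borel_measurable M"
    and bounded: "AE x in M. \<bar>f x\<bar> \<le> R" and "integrable M (\<lambda>x. (f x)\<^sup>2)"
  shows "integrable M (\<lambda>x. g_alpha \<alpha> (f x))"
proof (rule Bochner_Integration.integrable_bound)
  show "integrable M (\<lambda>x. exp (\<alpha> * R) * \<alpha> * (f x)\<^sup>2 / 2)"
    using assms(4) by auto
  show "AE x in M. norm (g_alpha \<alpha> (f x)) \<le> norm (exp (\<alpha> * R) * \<alpha> * (f x)\<^sup>2 / 2)"
    using bounded
    by eventually_elim (use assms(1) g_alpha_nonneg g_alpha_le_quadratic in force)
qed (unfold g_alpha_def, measurable)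

lemma integrable_g_alpha_diff:
  fixes u \<psi> :: "'a \<Rightarrow> real"
  assumes "\<alpha> > 0" and [measurable]: "u \<in> borel_measurable M" "\<psi> \<in> borel_measurable M"
    and "\<exists>K. AE x in M. \<bar>u x\<bar> \<le> K" "\<exists>K. \<forall>x. \<bar>\<psi> x\<bar> \<le> K"
    and "integrable M (\<lambda>x. (u x)\<^sup>2)" "integrable M (\<lambda>x. (\<psi> x)\<^sup>2)"
  shows "integrable M (\<lambda>x. g_alpha \<alpha> (u x - p * \<psi> x))"
proof -
  obtain Ku Kp where Ku: "AE x in M. \<bar>u x\<bar> \<le> Ku" and Kp: "\<forall>x. \<bar>\<psi> x\<bar> \<le> Kp"
    using assms(4,5) by blast
  have "AE x in M. \<bar>u x - p * \<psi> x\<bar> \<le> Ku + \<bar>p\<bar> * Kp"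
    using Ku
  proof eventually_elim
    case (elim x)
    have "\<bar>p * \<psi> x\<bar> \<le> \<bar>p\<bar> * Kp"
      using Kp by (simp add: abs_mult mult_left_mono)
    with elim show ?case
      by linarith
  qed
  moreover have "integrable M (\<lambda>x. (u x - p * \<psi> x)\<^sup>2)"
    using assms(6,7) by (intro integrable_square_diff) (simp_all add: power_mult_distrib)
  ultimately show ?thesis
    using assms(1) by (intro integrable_g_alpha) auto
qed

lemma measure_pos_if_square_integrable:
  fixes f :: "'a \<Rightarrow> real"
  assumes integrable: "integrable M (\<lambda>x. (f x)\<^sup>2)"
    and "d > 0" "A \<in> sets M" "\<And>x. x \<in> A \<Longrightarrow> d \<le> \<bar>f x\<bar>" "emeasure M A > 0"
  shows "measure M A > 0"
proof -
  have [measurable]: "(\<lambda>x. (f x)\<^sup>2) \<in> borel_measurable M"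
    using integrable by (rule borel_measurable_integrable)
  have "d\<^sup>2 \<le> (f x)\<^sup>2" if "x \<in> A" for x
    using power_mono[OF assms(4)[OF that], of 2] assms(2) by simp
  then have "A \<subseteq> {x \<in> space M. d\<^sup>2 \<le> (f x)\<^sup>2}"
    using sets.sets_into_space[OF assms(3)] by auto
  then have "emeasure M A \<le> emeasure M {x \<in> space M. d\<^sup>2 \<le> (f x)\<^sup>2}"
    by (rule emeasure_mono) measurable
  also have "\<dots> \<le> ennreal (1 / d\<^sup>2 * (\<integral>x. (f x)\<^sup>2 \<partial>M))"
    using integrable assms(2) by (intro integral_Markov_inequality) auto
  also have "\<dots> < \<infinity>"
    by simp
  finally show ?thesis
    using assms(5) by (simp add: emeasure_eq_ennreal_measure)
qed

lemma AE_abs_le_ess_sup_norm: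
  assumes "u \<in> borel_measurable M" "\<exists>K. AE x in M. \<bar>u x\<bar> \<le> K"
  shows "AE x in M. \<bar>u x\<bar> \<le> ess_sup_norm M u"
proof -
  obtain K where K: "AE x in M. \<bar>u x\<bar> \<le> K"
    using assms(2) by blast
  define E where "E = esssup M (\<lambda>x. ereal \<bar>u x\<bar>)"
  have below_E: "AE x in M. ereal \<bar>u x\<bar> \<le> E"
    unfolding E_def by (rule esssup_AE)
  have "E \<le> ereal K"
    unfolding E_def using K assms(1) by (intro esssup_I) auto
  then consider r where "E = ereal r" | "E = -\<infinity>"
    by (cases E) auto
  then show ?thesis
  proof cases
    case 1
    then show ?thesis
      using below_E by (simp add: ess_sup_norm_def flip: E_def)
  next
    case 2
    then have "AE x in M. False"
      using below_E by (auto elim: eventually_mono)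
    then show ?thesis
      by (rule eventually_mono) simp
  qed
qed

lemma ess_sup_norm_nonneg:
  assumes "u \<in> borel_measurable M"
  shows "0 \<le> ess_sup_norm M u"
proof (cases "esssup M (\<lambda>x. ereal \<bar>u x\<bar>)")
  case (real r)
  show ?thesis
  proof (rule ccontr)
    assume "\<not> 0 \<le> ess_sup_norm M u"
    then have "r < 0"
      using real by (simp add: ess_sup_norm_def)
    then have "AE x in M. False"
      using esssup_AE[of "\<lambda>x. ereal \<bar>u x\<bar>" M] real by (auto elim: eventually_mono)
    then have "emeasure M (space M) = 0"
      by (metis ae_filter_eq_bot_iff eventually_False)
    then have "esssup M (\<lambda>x. ereal \<bar>u x\<bar>) = -\<infinity>"
      using assms by (intro esssup_zero_space) auto
    with real show False
      by simp
  qed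
qed (simp_all add: ess_sup_norm_def)

lemma le_of_square_le_linear:
  fixes x \<beta> s U :: real
  assumes "\<beta> \<ge> 0" "s \<ge> 0" "U \<ge> 0"
    and square_le: "x\<^sup>2 \<le> s\<^sup>2 + 2 * \<beta> * x + 2 * \<beta> * U"
  shows "x \<le> 2 * \<beta> + U + s"
proof (rule ccontr)
  assume "\<not> ?thesis"
  then have "x * (x - 2 * \<beta>) > (2 * \<beta> + U + s) * (U + s)"
    using assms(1-3) by (intro mult_strict_mono) auto
  moreover have "(2 * \<beta> + U + s) * (U + s) \<ge> 2 * \<beta> * U + s\<^sup>2"
    using assms(1-3) by (simp add: power2_eq_square algebra_simps)
  ultimately show False
    using square_le by (simp add: power2_eq_square algebra_simps)
qed

lemma le_of_quadratic_growth:
  fixes a c U N q \<phi> :: real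
  assumes "a > 0" "c > 0" "U \<ge> 0" "N \<ge> 0" "q \<ge> U / c"
    and growth: "a * (q * c - U)\<^sup>2 / 2 - q * \<phi> \<le> N"
  shows "q \<le> 3 * U / c + 2 * \<bar>\<phi>\<bar> / (a * c\<^sup>2) + sqrt 2 / (sqrt a * c) * sqrt N"
proof -
  define x where "x = q * c - U"
  define \<beta> where "\<beta> = \<bar>\<phi>\<bar> / (a * c)"
  define s where "s = sqrt (2 * N / a)"
  have q_eq: "q = (x + U) / c"
    using assms(2) by (simp add: x_def)
  have "x \<ge> 0"
    using assms(2,5) by (simp add: x_def field_simps)
  then have "q * \<phi> \<le> \<bar>\<phi>\<bar> * ((x + U) / c)"
    using assms(2,3) q_eq by (metis abs_ge_self abs_mult abs_of_nonneg add_nonneg_nonneg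
        divide_nonneg_pos mult.commute)
  then have "a * x\<^sup>2 \<le> 2 * N + 2 * \<bar>\<phi>\<bar> * ((x + U) / c)"
    using growth by (simp add: x_def)
  also have "\<dots> = a * (s\<^sup>2 + 2 * \<beta> * x + 2 * \<beta> * U)"
    using assms(1,2,4) by (simp add: s_def \<beta>_def field_simps)
  finally have "x \<le> 2 * \<beta> + U + s"
    using assms(1-4) by (intro le_of_square_le_linear) (simp_all add: \<beta>_def s_def)
  then have "q \<le> (2 * \<beta> + 2 * U + s) / c"
    using q_eq assms(2) by (simp add: divide_right_mono)
  also have "\<dots> = 2 * U / c + 2 * \<bar>\<phi>\<bar> / (a * c\<^sup>2) + sqrt 2 / (sqrt a * c) * sqrt N"
    using assms(1,2) by (simp add: \<beta>_def s_def real_sqrt_divide real_sqrt_mult field_simps power2_eq_square)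
  also have "\<dots> \<le> 3 * U / c + 2 * \<bar>\<phi>\<bar> / (a * c\<^sup>2) + sqrt 2 / (sqrt a * c) * sqrt N"
    using assms(2,3) by (simp add: divide_right_mono)
  finally show ?thesis .
qed

lemma measure_mult_le_integral:
  fixes f :: "'a \<Rightarrow> real"
  assumes "integrable M f" "AE x in M. 0 \<le> f x"
    and "A \<in> sets M" "emeasure M A < \<infinity>" "AE x in M. x \<in> A \<longrightarrow> k \<le> f x"
  shows "measure M A * k \<le> (\<integral>x. f x \<partial>M)"
proof -
  have "(\<integral>x. indicator A x * k \<partial>M) \<le> (\<integral>x. f x \<partial>M)"
  proof (rule integral_mono_AE)
    show "integrable M (\<lambda>x. indicator A x * k)"
      using assms(3,4) by (intro integrable_mult_left integrable_real_indicator)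
    show "AE x in M. indicator A x * k \<le> f x"
      using assms(2,5) by eventually_elim (simp split: split_indicator)
  qed (rule assms(1))
  then show ?thesis
    using assms(3) by simp
qed

lemma measure_mult_quadratic_le_integral_g_alpha:
  fixes f :: "'a \<Rightarrow> real"
  assumes "\<alpha> > 0" "k \<ge> 0" "integrable M (\<lambda>x. g_alpha \<alpha> (f x))"
    and "A \<in> sets M" "emeasure M A < \<infinity>" and lower: "AE x in M. x \<in> A \<longrightarrow> k \<le> f x"
  shows "measure M A * (\<alpha> * k\<^sup>2 / 2) \<le> (\<integral>x. g_alpha \<alpha> (f x) \<partial>M)"
proof (rule measure_mult_le_integral)
  show "AE x in M. x \<in> A \<longrightarrow> \<alpha> * k\<^sup>2 / 2 \<le> g_alpha \<alpha> (f x)"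
    using lower
  proof eventually_elim
    case (elim x)
    show ?case
    proof
      assume "x \<in> A"
      then have "k \<le> f x"
        using elim by simp
      then have "\<alpha> * k\<^sup>2 / 2 \<le> \<alpha> * (f x)\<^sup>2 / 2"
        using assms(1,2) by (intro divide_right_mono mult_left_mono power_mono) auto
      also have "\<dots> \<le> g_alpha \<alpha> (f x)"
        using \<open>k \<le> f x\<close> assms(1,2) by (intro g_alpha_ge_quadratic) auto
      finally show "\<alpha> * k\<^sup>2 / 2 \<le> g_alpha \<alpha> (f x)" .
    qed
  qed
qed (use assms g_alpha_nonneg in auto)

lemma upper_bound_of_objective_le:
  fixes M :: "'a measure" and u \<psi> :: "'a \<Rightarrow> real"
  assumes "\<alpha> > 0" "c > 0" "U \<ge> 0" "N \<ge> 0"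
    and A: "A \<in> sets M" "measure M A > 0" "\<And>x. x \<in> A \<Longrightarrow> \<psi> x \<le> - c"
    and u_bound: "AE x in M. \<bar>u x\<bar> \<le> U"
    and integrable: "integrable M (\<lambda>x. g_alpha \<alpha> (u x - q * \<psi> x))"
    and objective_le: "(\<integral>x. g_alpha \<alpha> (u x - q * \<psi> x) \<partial>M) - q * \<phi> \<le> N"
  shows "q \<le> 3 * U / c + 2 * \<bar>\<phi>\<bar> / (\<alpha> * measure M A * c\<^sup>2)
           + sqrt 2 / (sqrt (\<alpha> * measure M A) * c) * sqrt N"
proof (cases "q \<ge> U / c")
  case False
  have "U / c \<le> 3 * U / c"
    using assms(2,3) by (simp add: divide_right_mono)
  then show ?thesis
    using False assms(1,2,4) A(2) by (smt (verit) divide_nonneg_nonneg mult_nonneg_nonneg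
        real_sqrt_ge_zero zero_le_power2)
next
  case True
  have "q * c - U \<ge> 0"
    using True assms(2) by (simp add: field_simps)
  have "q \<ge> 0"
    using True assms(2,3) by (smt (verit) divide_nonneg_pos)
  have finite: "emeasure M A < \<infinity>"
    using A(2) by (simp add: measure_def enn2real_positive_iff)
  have "AE x in M. x \<in> A \<longrightarrow> q * c - U \<le> u x - q * \<psi> x"
    using u_bound
  proof eventually_elim
    case (elim x)
    show ?case
    proof
      assume "x \<in> A"
      then have "q * c \<le> q * (- \<psi> x)"
        using A(3) \<open>q \<ge> 0\<close> by (intro mult_left_mono) force+
      then show "q * c - U \<le> u x - q * \<psi> x"
        using elim by simp
    qed
  qed
  then have "measure M A * (\<alpha> * (q * c - U)\<^sup>2 / 2) \<le> (\<integral>x. g_alpha \<alpha> (u x - q * \<psi> x) \<partial>M)"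
    using assms(1) \<open>q * c - U \<ge> 0\<close> integrable A(1) finite
    by (intro measure_mult_quadratic_le_integral_g_alpha) auto
  then have "\<alpha> * measure M A * (q * c - U)\<^sup>2 / 2 - q * \<phi> \<le> N"
    using objective_le by (simp add: algebra_simps)
  then show ?thesis
    using assms(1-4) A(2) True by (intro le_of_quadratic_growth) auto
qed

theorem proposition3p3:
  fixes \<nu> :: "real measure" and \<alpha> c Cb \<phi> pstar :: real
    and \<psi> u :: "real \<Rightarrow> real" and Cset :: "real set"
  assumes nu_sets: "sets \<nu> = sets borel"
    and nu_zero: "emeasure \<nu> {0} = 0"
    and nu_levy: "(\<integral>\<^sup>+ x. ennreal (min 1 (x\<^sup>2)) \<partial>\<nu>) < \<infinity>"
    and alpha_pos: "\<alpha> > 0"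
    and psi_meas: "\<psi> \<in> borel_measurable \<nu>"
    and psi_bdd: "\<exists>K. \<forall>x. \<bar>\<psi> x\<bar> \<le> K"
    and psi_sq: "integrable \<nu> (\<lambda>x. (\<psi> x)\<^sup>2)"
    and psi_gt: "\<forall>x. \<psi> x > -1"
    and psi_pos: "emeasure \<nu> {x \<in> space \<nu>. \<psi> x > 0} > 0"
    and psi_neg: "emeasure \<nu> {x \<in> space \<nu>. \<psi> x < 0} > 0"
    and c_pos: "c > 0" and C_pos: "Cb > 0"
    and psi_C: "emeasure \<nu> {x \<in> space \<nu>. \<psi> x > Cb} > 0"
    and psi_c: "emeasure \<nu> {x \<in> space \<nu>. \<psi> x < - c} > 0"
    and Cset_closed: "closed Cset" and Cset_zero: "0 \<in> Cset"
    and u_meas: "u \<in> borel_measurable \<nu>"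
    and u_L2: "integrable \<nu> (\<lambda>x. (u x)\<^sup>2)"
    and u_Linf: "\<exists>K. AE x in \<nu>. \<bar>u x\<bar> \<le> K"
    and pstar_in: "pstar \<in> Cset"
    and pstar_min: "\<forall>p \<in> Cset. objective \<nu> \<alpha> u \<psi> \<phi> pstar \<le> objective \<nu> \<alpha> u \<psi> \<phi> p"
  shows "- 3 * ess_sup_norm \<nu> u / Cb
           - 2 * \<bar>\<phi>\<bar> / (\<alpha> * measure \<nu> {x \<in> space \<nu>. \<psi> x > Cb} * Cb\<^sup>2)
           - sqrt 2 / (sqrt (\<alpha> * measure \<nu> {x \<in> space \<nu>. \<psi> x > Cb}) * Cb)
               * sqrt (alpha_norm \<nu> \<alpha> u)
         \<le> pstar
       \<and> pstar \<le> 3 * ess_sup_norm \<nu> u / c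
           + 2 * \<bar>\<phi>\<bar> / (\<alpha> * measure \<nu> {x \<in> space \<nu>. \<psi> x < - c} * c\<^sup>2)
           + sqrt 2 / (sqrt (\<alpha> * measure \<nu> {x \<in> space \<nu>. \<psi> x < - c}) * c)
               * sqrt (alpha_norm \<nu> \<alpha> u)"
proof -
  note [measurable] = psi_meas
  define U where "U = ess_sup_norm \<nu> u"
  define N where "N = alpha_norm \<nu> \<alpha> u"
  have u_bound: "AE x in \<nu>. \<bar>u x\<bar> \<le> U"
    unfolding U_def using u_meas u_Linf by (rule AE_abs_le_ess_sup_norm)
  have "U \<ge> 0" "N \<ge> 0"
    using ess_sup_norm_nonneg[OF u_meas] g_alpha_nonneg[OF alpha_pos]
    by (auto simp: U_def N_def alpha_norm_def)
  have integrable: "integrable \<nu> (\<lambda>x. g_alpha \<alpha> (u x - p * \<psi> x))" for p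
    using alpha_pos u_meas psi_meas u_Linf psi_bdd u_L2 psi_sq by (rule integrable_g_alpha_diff)
  have at_pstar: "(\<integral>x. g_alpha \<alpha> (u x - pstar * \<psi> x) \<partial>\<nu>) - pstar * \<phi> \<le> N"
    using pstar_min Cset_zero by (force simp: N_def alpha_norm_def objective_def)
  have below_pos: "measure \<nu> {x \<in> space \<nu>. \<psi> x < - c} > 0"
    using c_pos psi_c by (auto intro!: measure_pos_if_square_integrable[OF psi_sq])
  have above_pos: "measure \<nu> {x \<in> space \<nu>. \<psi> x > Cb} > 0"
    using C_pos psi_C by (auto intro!: measure_pos_if_square_integrable[OF psi_sq])
  have upper: "pstar \<le> 3 * U / c + 2 * \<bar>\<phi>\<bar> / (\<alpha> * measure \<nu> {x \<in> space \<nu>. \<psi> x < - c} * c\<^sup>2)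
      + sqrt 2 / (sqrt (\<alpha> * measure \<nu> {x \<in> space \<nu>. \<psi> x < - c}) * c) * sqrt N"
    using alpha_pos c_pos \<open>U \<ge> 0\<close> \<open>N \<ge> 0\<close> below_pos u_bound integrable at_pstar
    by (intro upper_bound_of_objective_le) auto
  \<comment> \<open>Replacing \<open>\<psi>, \<phi>, pstar\<close> by their negatives leaves the objective unchanged.\<close>
  have lower: "- pstar \<le> 3 * U / Cb + 2 * \<bar>\<phi>\<bar> / (\<alpha> * measure \<nu> {x \<in> space \<nu>. \<psi> x > Cb} * Cb\<^sup>2)
      + sqrt 2 / (sqrt (\<alpha> * measure \<nu> {x \<in> space \<nu>. \<psi> x > Cb}) * Cb) * sqrt N"
    using upper_bound_of_objective_le[of \<alpha> Cb U N "{x \<in> space \<nu>. \<psi> x > Cb}" \<nu> "\<lambda>x. - \<psi> x"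
        u "- pstar" "- \<phi>"]
      alpha_pos C_pos \<open>U \<ge> 0\<close> \<open>N \<ge> 0\<close> above_pos u_bound integrable at_pstar
    by auto
  show ?thesis
    using upper lower by (simp add: U_def N_def)
qed

end
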